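(* Let $(\mu,\sigma)\in\mathsf{UM}\rtimes\mathsf{US}$, written $\mu=1+\mu_{+}$ with $\mu_{+}\in\mathbb{K}[[\mathtt{x}]]^{+}$ and $\sigma=\mathtt{x}+\sigma_{+}$ with $\sigma_{+}\in\mathfrak{M}^{+}$, and let $\lambda\in\mathbb{K}$. Then the series $$(\mu,\sigma)^{\rtimes\lambda}:=\sum_{n\ge0}\binom{\lambda}{n}(\mu_{+},\sigma_{+})^{\rtimes n}$$ converges in $\mathbb{K}[[\mathtt{x}]]\times\mathfrak{M}$ and its sum belongs to $\mathsf{UM}\rtimes\mathsf{US}$.
   Context: $\mathbb{K}$ is a field of characteristic zero (discrete topology); $\mathbb{K}[[\mathtt{x}]]$ has the $(\mathtt{x})$-adic topology given by the order valuation $\nu$ ($\nu(0)=+\infty$). $\mathfrak{M}:=\mathtt{x}\mathbb{K}[[\mathtt{x}]]$; $\mathbb{K}[[\mathtt{x}]]\times\mathfrak{M}$ has the product topology and componentwise vector space structure. $\mathbb{K}[[\mathtt{x}]]^{+}:=\mathfrak{M}$, $\mathfrak{M}^{+}:=\{\sigma\in\mathfrak{M}:\nu(\sigma)>1\}$. For $h=\sum h_n\mathtt{x}^n$ and $\tau\in\mathfrak{M}$, $h\circ\tau:=\sum h_n\tau^n$. Product: $(\mu_1,\sigma_1)\rtimes(\mu_2,\sigma_2):=((\mu_1\circ\sigma_2)\mu_2,\sigma_1\circ\sigma_2)$; $(\mu,\sigma)^{\rtimes0}:=(1,\mathtt{x})$, $(\mu,\sigma)^{\rtimes n}$ the $n$-fold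 product. $\mathsf{UM}:=\{1+\mu_{+}:\mu_{+}\in\mathbb{K}[[\mathtt{x}]]^{+}\}$, $\mathsf{US}:=\{\mathtt{x}+\sigma_{+}:\sigma_{+}\in\mathfrak{M}^{+}\}$, and $\mathsf{UM}\rtimes\mathsf{US}$ (the Riordan group) is the set of pairs $(\mu,\sigma)$ with $\mu\in\mathsf{UM}$, $\sigma\in\mathsf{US}$. Generalized binomial coefficients: $\binom{\lambda}{n}:=\frac{\lambda(\lambda-1)\cdots(\lambda-n+1)}{n!}$, $\binom{\lambda}{0}=1$. *)

theory Defs
  imports "HOL-Computational_Algebra.Formal_Power_Series" "HOL-Library.Product_Plus"
begin

definition riordan_prod :: "'a::field fps \<times> 'a fps \<Rightarrow> 'a fps \<times> 'a fps \<Rightarrow> 'a fps \<times> 'a fps"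
  where "riordan_prod p q = ((fst p oo snd q) * fst q, snd p oo snd q)"

primrec riordan_pow :: "'a::field fps \<times> 'a fps \<Rightarrow> nat \<Rightarrow> 'a fps \<times> 'a fps" where
  "riordan_pow p 0 = (1, fps_X)"
| "riordan_pow p (Suc n) = riordan_prod (riordan_pow p n) p"

definition riordan_group :: "('a::field fps \<times> 'a fps) set"
  where "riordan_group = {(mu, sigma). fps_nth mu 0 = 1 \<and> fps_nth sigma 0 = 0 \<and> fps_nth sigma 1 = 1}"

definition pair_scale :: "'a::field \<Rightarrow> 'a fps \<times> 'a fps \<Rightarrow> 'a fps \<times> 'a fps"
  where "pair_scale c p = (fps_const c * fst p, fps_const c * snd p)"

end

theory Submission
  imports Defs
begin

text \<open>If \<open>\<mu>\<^sub>+\<close> and \<open>\<sigma>\<^sub>+\<close> have orders at least 1 and 2, both components of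
  \<open>(\<mu>\<^sub>+, \<sigma>\<^sub>+)\<^sup>n\<close> have order at least \<open>n\<close>. Hence every coefficient of the partial
  sums is eventually constant, which is convergence in the \<open>(x)\<close>-adic topology. Only the
  terms \<open>n = 0\<close> and \<open>n = 1\<close> contribute to the coefficients of \<open>x\<^sup>0\<close> and \<open>x\<^sup>1\<close>, and the
  term \<open>n = 1\<close> contributes nothing there, so the limit starts like \<open>(1, x)\<close>.\<close>

unbundle fps_syntax

lemma fps_mult_nth_below:
  fixes f g :: "'a::comm_semiring_0 fps"
  assumes "\<And>i. i < m \<Longrightarrow> f $ i = 0" "\<And>j. j < d \<Longrightarrow> g $ j = 0" "k < m + d"
  shows "(f * g) $ k = 0"
proof -
  have "f $ i * g $ (k - i) = 0" if "i \<le> k" for i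
    using assms that by (cases "i < m") auto
  then show ?thesis by (simp add: fps_mult_nth)
qed

lemma fps_power_nth_below:
  fixes g :: "'a::comm_semiring_1 fps"
  assumes "\<And>j. j < d \<Longrightarrow> g $ j = 0" "k < i * d"
  shows "(g ^ i) $ k = 0"
  using assms(2)
proof (induction i arbitrary: k)
  case (Suc i)
  show ?case
    unfolding power_Suc
    by (rule fps_mult_nth_below[where m = d and d = "i * d"]) (use assms(1) Suc in auto)
qed simp

lemma fps_compose_nth_below:
  fixes f g :: "'a::comm_semiring_1 fps"
  assumes "\<And>i. i < m \<Longrightarrow> f $ i = 0" "\<And>j. j < d \<Longrightarrow> g $ j = 0" "k < m * d"
  shows "(f oo g) $ k = 0"
proof -
  have "f $ i * (g ^ i) $ k = 0" for i
  proof (cases "i < m")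
    case False
    then have "k < i * d" using assms(3) mult_le_mono1[of m i d] by linarith
    then show ?thesis using fps_power_nth_below[OF assms(2)] by simp
  qed (simp add: assms(1))
  then show ?thesis by (simp add: fps_compose_nth)
qed

text \<open>The bound \<open>max 1 n\<close> covers \<open>n = 0\<close>, where the power is \<open>x\<close>; from then on composing
  with a series of order 2 doubles the order.\<close>

lemma riordan_pow_snd_nth_below:
  fixes m s :: "'a::field fps"
  assumes "s $ 0 = 0" "s $ 1 = 0" "k < max 1 n"
  shows "snd (riordan_pow (m, s) n) $ k = 0"
  using assms(3)
proof (induction n arbitrary: k)
  case (Suc n)
  have s_below: "s $ j = 0" if "j < 2" for j
    using assms(1,2) that less_2_cases by auto
  have "(snd (riordan_pow (m, s) n) oo s) $ k = 0"
    by (rule fps_compose_nth_below[OF _ s_below, where m = "max 1 n"]) (use Suc in auto)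
  then show ?case by (simp add: riordan_prod_def)
qed simp

lemma riordan_pow_fst_nth_below:
  fixes m s :: "'a::field fps"
  assumes "m $ 0 = 0" "s $ 0 = 0" "k < n"
  shows "fst (riordan_pow (m, s) n) $ k = 0"
  using assms(3)
proof (induction n arbitrary: k)
  case (Suc n)
  have "(fst (riordan_pow (m, s) n) oo s) $ i = 0" if "i < n" for i
    by (rule fps_compose_nth_below[where m = n and d = 1]) (use Suc.IH assms(2) that in auto)
  then have "((fst (riordan_pow (m, s) n) oo s) * m) $ k = 0"
    by (intro fps_mult_nth_below[where m = n and d = 1]) (use assms(1) Suc.prems in auto)
  then show ?case by (simp add: riordan_prod_def)
qed simp

lemma tendsto_fps_partial_sums:
  fixes F :: "nat \<Rightarrow> 'a::ab_group_add fps"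
  assumes "\<And>n k. k < n \<Longrightarrow> F n $ k = 0"
  shows "(\<lambda>N. \<Sum>n<N. F n) \<longlonglongrightarrow> Abs_fps (\<lambda>k. \<Sum>n\<le>k. F n $ k)"
proof (rule tendsto_fpsI)
  fix k
  have "(\<Sum>n<N. F n) $ k = (\<Sum>n\<le>k. F n $ k)" if "k < N" for N
    unfolding fps_sum_nth by (rule sum.mono_neutral_right) (use assms that in auto)
  then show "\<forall>\<^sub>F N in sequentially. (\<Sum>n<N. F n) $ k = Abs_fps (\<lambda>k. \<Sum>n\<le>k. F n $ k) $ k"
    unfolding eventually_sequentially by (metis Suc_le_lessD fps_nth_Abs_fps)
qed

theorem mainTheorem13:
  fixes mu sigma :: "'a::field_char_0 fps" and lam :: 'a
  assumes "(mu, sigma) \<in> riordan_group"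
  shows "\<exists>S. (\<lambda>N. \<Sum>n<N. pair_scale (lam gchoose n) (riordan_pow (mu - 1, sigma - fps_X) n))
              \<longlonglongrightarrow> S
          \<and> S \<in> riordan_group"
proof -
  define P where "P = riordan_pow (mu - 1, sigma - fps_X)"
  define c where "c n = lam gchoose n" for n
  have m0: "(mu - 1) $ 0 = 0" and s0: "(sigma - fps_X) $ 0 = 0" and s1: "(sigma - fps_X) $ 1 = 0"
    using assms by (auto simp: riordan_group_def)
  define S1 where "S1 = Abs_fps (\<lambda>k. \<Sum>n\<le>k. (fps_const (c n) * fst (P n)) $ k)"
  define S2 where "S2 = Abs_fps (\<lambda>k. \<Sum>n\<le>k. (fps_const (c n) * snd (P n)) $ k)"
  have "(\<lambda>N. \<Sum>n<N. fps_const (c n) * fst (P n)) \<longlonglongrightarrow> S1"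
    unfolding S1_def P_def by (rule tendsto_fps_partial_sums) (simp add: riordan_pow_fst_nth_below[OF m0 s0])
  moreover have "(\<lambda>N. \<Sum>n<N. fps_const (c n) * snd (P n)) \<longlonglongrightarrow> S2"
    unfolding S2_def P_def by (rule tendsto_fps_partial_sums) (simp add: riordan_pow_snd_nth_below[OF s0 s1])
  ultimately have "(\<lambda>N. (\<Sum>n<N. fps_const (c n) * fst (P n), \<Sum>n<N. fps_const (c n) * snd (P n)))
      \<longlonglongrightarrow> (S1, S2)"
    by (rule tendsto_Pair)
  moreover have "(\<Sum>n<N. pair_scale (c n) (P n))
      = (\<Sum>n<N. fps_const (c n) * fst (P n), \<Sum>n<N. fps_const (c n) * snd (P n))" for N
    by (simp add: prod_eq_iff fst_sum snd_sum pair_scale_def)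
  ultimately have "(\<lambda>N. \<Sum>n<N. pair_scale (c n) (P n)) \<longlonglongrightarrow> (S1, S2)"
    by simp
  moreover have "(S1, S2) \<in> riordan_group"
    using s1 by (simp add: riordan_group_def S1_def S2_def P_def c_def riordan_prod_def fps_X_fps_compose)
  ultimately show ?thesis unfolding P_def c_def by blast
qed

end
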